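(* Let $n\ge 2$ and integers $0<k_1<k_2<k_3\le n$ with $k_2<n$. Let $g_1:\{0,1\}^{k_2}\to\{0,1\}$ be a Boolean function depending on all of its input variables. Let $P_1$ be the $k_2$-party box on parties $1,\dots,k_2$ with $P_1(a_1\dots a_{k_2}\mid x_1\dots x_{k_2})=2^{-(k_2-1)}$ if $\bigoplus_{i=1}^{k_2}a_i=g_1(x_1,\dots,x_{k_2})$ and $0$ otherwise, and let $P_2$ be the box on parties $k_1,\dots,n$ with $P_2(b_{k_1}\dots b_n\mid x_{k_1}\dots x_n)=2^{-(n-k_1)}$ if $\bigoplus_{i=k_1}^n b_i=\prod_{i=k_1}^{k_3}x_i$ and $0$ otherwise. Using independent copies of $P_1$ and $P_2$ in parallel (each party $i$ feeding its input $x_i$ into every box it participates in), let party $i$ output $c_i=a_i$ for $1\le i\le k_1-1$, $c_i=a_i\oplus b_i$ for $k_1\le i\le k_2$, and $c_i=b_i$ for $k_2+1\le i\le n$. Then the resulting $n$-partite box has the same conditional distribution as the full-correlation box $$P(\vec c\mid\vec x)=\begin{cases}2^{-(n-1)} & \bigoplus_{i=1}^n c_i=g_1(x_1,\dots,x_{k_2})\oplus\prod_{i=k_1}^{k_3}x_i,\\ 0&\text{otherwise.}\end{cases}$$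
   Context: All inputs and outputs are bits; $\oplus$ denotes addition modulo 2. An $m$-party box is a conditional distribution of $m$ output bits given $m$ input bits. *)

theory Defs
  imports Complex_Main "HOL-Library.FuncSet"
begin

text \<open>Bits are booleans (True = 1); xor is inequality on bool.\<close>

definition bigxor :: "nat set \<Rightarrow> (nat \<Rightarrow> bool) \<Rightarrow> bool" where
  "bigxor A f = odd (card {i \<in> A. f i})"

definition depends_on_all :: "nat \<Rightarrow> ((nat \<Rightarrow> bool) \<Rightarrow> bool) \<Rightarrow> bool" where
  "depends_on_all k g = (\<forall>i\<in>{1..k}. \<exists>x\<in>{1..k} \<rightarrow>\<^sub>E (UNIV::bool set).
      g x \<noteq> g (x(i := \<not> x i)))"

definition box1 :: "nat \<Rightarrow> ((nat \<Rightarrow> bool) \<Rightarrow> bool) \<Rightarrow> (nat \<Rightarrow> bool) \<Rightarrow> (nat \<Rightarrow> bool) \<Rightarrow> real" where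
  "box1 k2 g1 a x = (if bigxor {1..k2} a = g1 (restrict x {1..k2}) then 1 / 2 ^ (k2 - 1) else 0)"

definition box2 :: "nat \<Rightarrow> nat \<Rightarrow> nat \<Rightarrow> (nat \<Rightarrow> bool) \<Rightarrow> (nat \<Rightarrow> bool) \<Rightarrow> real" where
  "box2 n k1 k3 b x = (if bigxor {k1..n} b = (\<forall>i\<in>{k1..k3}. x i) then 1 / 2 ^ (n - k1) else 0)"

definition out :: "nat \<Rightarrow> nat \<Rightarrow> (nat \<Rightarrow> bool) \<Rightarrow> (nat \<Rightarrow> bool) \<Rightarrow> nat \<Rightarrow> bool" where
  "out k1 k2 a b i = (if i < k1 then a i else if i \<le> k2 then (a i \<noteq> b i) else b i)"

definition composed_box :: "nat \<Rightarrow> nat \<Rightarrow> nat \<Rightarrow> nat \<Rightarrow> ((nat \<Rightarrow> bool) \<Rightarrow> bool)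
    \<Rightarrow> (nat \<Rightarrow> bool) \<Rightarrow> (nat \<Rightarrow> bool) \<Rightarrow> real" where
  "composed_box n k1 k2 k3 g1 c x =
     (\<Sum>a\<in>{1..k2} \<rightarrow>\<^sub>E (UNIV::bool set). \<Sum>b\<in>{k1..n} \<rightarrow>\<^sub>E (UNIV::bool set).
        if (\<forall>i\<in>{1..n}. c i = out k1 k2 a b i) then box1 k2 g1 a x * box2 n k1 k3 b x else 0)"

definition full_box :: "nat \<Rightarrow> nat \<Rightarrow> nat \<Rightarrow> nat \<Rightarrow> ((nat \<Rightarrow> bool) \<Rightarrow> bool)
    \<Rightarrow> (nat \<Rightarrow> bool) \<Rightarrow> (nat \<Rightarrow> bool) \<Rightarrow> real" where
  "full_box n k1 k2 k3 g1 c x =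
     (if bigxor {1..n} c = (g1 (restrict x {1..k2}) \<noteq> (\<forall>i\<in>{k1..k3}. x i))
      then 1 / 2 ^ (n - 1) else 0)"

end

theory Submission
  imports Defs
begin

text \<open>Given the final outputs c and the outputs a of the first box, the outputs b of the
  second box are forced, and a is forced on the parties 1..k1-1 that see only the first box.
  For every such a the parity of the forced b is the parity of c xor the parity of a, so c has
  positive probability iff its parity is g1 xor the product. In that case exactly half of the
  2^(k2-k1+1) free choices of a have the parity demanded by the first box, which gives
  2^(k2-k1) * 2^-(k2-1) * 2^-(n-k1) = 2^-(n-1).\<close>

lemma bigxor_empty [simp]: "bigxor {} f = False"
  by (simp add: bigxor_def)

lemma bigxor_insert:
  assumes "finite A" and "j \<notin> A"
  shows "bigxor (insert j A) f = (f j \<noteq> bigxor A f)"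
proof (cases "f j")
  case True
  then have "{i \<in> insert j A. f i} = insert j {i \<in> A. f i}" by auto
  then show ?thesis using assms True by (simp add: bigxor_def)
next
  case False
  then have "{i \<in> insert j A. f i} = {i \<in> A. f i}" by auto
  then show ?thesis using False by (simp add: bigxor_def)
qed

lemma bigxor_cong: "(\<And>i. i \<in> A \<Longrightarrow> f i = g i) \<Longrightarrow> bigxor A f = bigxor A g"
  unfolding bigxor_def by (metis (mono_tags, lifting) Collect_cong)

lemma bigxor_Un_disjoint:
  assumes "finite A" and "finite B" and "A \<inter> B = {}"
  shows "bigxor (A \<union> B) f = (bigxor A f \<noteq> bigxor B f)"
  using assms
proof (induction A rule: finite_induct)
  case (insert j A)
  then have "bigxor (insert j (A \<union> B)) f = (f j \<noteq> bigxor (A \<union> B) f)"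
    by (intro bigxor_insert) auto
  with insert show ?case by (simp add: bigxor_insert) argo
qed simp

lemma bigxor_xor:
  assumes "finite A"
  shows "bigxor A (\<lambda>i. f i \<noteq> g i) = (bigxor A f \<noteq> bigxor A g)"
  using assms by (induction A rule: finite_induct) (simp_all add: bigxor_insert, blast)

lemma bigxor_fun_upd_not:
  assumes "finite A" and "j \<in> A"
  shows "bigxor A (f(j := \<not> f j)) = (\<not> bigxor A f)"
proof -
  have A: "A = insert j (A - {j})" using assms(2) by auto
  have "bigxor (A - {j}) (f(j := \<not> f j)) = bigxor (A - {j}) f"
    by (rule bigxor_cong) auto
  then show ?thesis
    using A bigxor_insert[of "A - {j}" j] assms(1) by (metis Diff_iff finite_Diff fun_upd_same insertI1)
qed

lemma bigxor_ivl_split: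
  assumes "m \<le> k" and "k \<le> Suc n"
  shows "bigxor {m..n} f = (bigxor {m..<k} f \<noteq> bigxor {k..n} f)"
proof -
  have "{m..n} = {m..<k} \<union> {k..n}" and "{m..<k} \<inter> {k..n} = {}" using assms by auto
  then show ?thesis using bigxor_Un_disjoint[of "{m..<k}" "{k..n}" f] by simp
qed

lemma card_PiE_agree:
  assumes "finite A" and "F \<subseteq> A"
  shows "card {a \<in> A \<rightarrow>\<^sub>E (UNIV::bool set). \<forall>i\<in>F. a i = c i} = 2 ^ card (A - F)"
proof -
  let ?T = "{a \<in> A \<rightarrow>\<^sub>E (UNIV::bool set). \<forall>i\<in>F. a i = c i}"
  let ?R = "(A - F) \<rightarrow>\<^sub>E (UNIV::bool set)"
  have "bij_betw (\<lambda>a. restrict a (A - F)) ?T ?R"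
  proof (rule bij_betwI[where g = "\<lambda>f i. if i \<in> F then c i else f i"])
    show "(\<lambda>f i. if i \<in> F then c i else f i) \<in> ?R \<rightarrow> ?T"
      using assms(2) by (auto simp: PiE_def extensional_def)
    show "(\<lambda>i. if i \<in> F then c i else restrict a (A - F) i) = a" if "a \<in> ?T" for a
      using that by (auto simp: PiE_def extensional_def)
    show "restrict (\<lambda>i. if i \<in> F then c i else f i) (A - F) = f" if "f \<in> ?R" for f
      using that by (auto simp: PiE_def extensional_def fun_eq_iff)
  qed auto
  then have "card ?T = card ?R" by (rule bij_betw_same_card)
  also have "\<dots> = 2 ^ card (A - F)" using assms(1) by (simp add: card_PiE)
  finally show ?thesis .
qed

text \<open>Flipping one free coordinate is an involution exchanging the two parity classes.\<close>

lemma card_PiE_agree_bigxor: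
  assumes "finite A" and "F \<subseteq> A" and "F \<noteq> A"
  shows "card {a \<in> A \<rightarrow>\<^sub>E (UNIV::bool set). (\<forall>i\<in>F. a i = c i) \<and> bigxor A a = v}
           = 2 ^ (card (A - F) - 1)"
proof -
  define S where "S w = {a \<in> A \<rightarrow>\<^sub>E (UNIV::bool set). (\<forall>i\<in>F. a i = c i) \<and> bigxor A a = w}"
    for w
  obtain j where j: "j \<in> A" "j \<notin> F" using assms(2,3) by blast
  define flip where "flip a = a(j := \<not> a j)" for a :: "nat \<Rightarrow> bool"
  have flip_S: "flip a \<in> S (\<not> w)" if "a \<in> S w" for a w
  proof -
    have "flip a \<in> A \<rightarrow>\<^sub>E (UNIV::bool set)"
      using that j(1) PiE_fun_upd[of "\<not> a j" "\<lambda>_. UNIV" j a A] by (simp add: S_def flip_def insert_absorb)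
    then show ?thesis
      using that j assms(1) by (auto simp: S_def flip_def bigxor_fun_upd_not)
  qed
  have "bij_betw flip (S v) (S (\<not> v))"
  proof (rule bij_betwI[where g = flip])
    show "flip \<in> S v \<rightarrow> S (\<not> v)" using flip_S by blast
    show "flip \<in> S (\<not> v) \<rightarrow> S v" using flip_S[of _ "\<not> v"] by simp
  qed (simp_all add: flip_def)
  then have same: "card (S v) = card (S (\<not> v))" by (rule bij_betw_same_card)
  have "S v \<union> S (\<not> v) = {a \<in> A \<rightarrow>\<^sub>E (UNIV::bool set). \<forall>i\<in>F. a i = c i}"
    and disj: "S v \<inter> S (\<not> v) = {}" by (auto simp: S_def)
  moreover have "finite (S w)" for w
    using assms(1) by (simp add: S_def finite_PiE)
  ultimately have "card (S v) + card (S (\<not> v)) = 2 ^ card (A - F)"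
    using card_PiE_agree[OF assms(1,2)] card_Un_disjoint[OF _ _ disj] by simp
  moreover have "card (A - F) \<noteq> 0" using assms(1) j by auto
  ultimately show ?thesis
    unfolding S_def[symmetric] using same by (cases "card (A - F)") simp_all
qed

definition forced_box2_output :: "nat \<Rightarrow> nat \<Rightarrow> nat \<Rightarrow> (nat \<Rightarrow> bool) \<Rightarrow> (nat \<Rightarrow> bool) \<Rightarrow> nat \<Rightarrow> bool"
  where "forced_box2_output n k1 k2 c a = restrict (\<lambda>i. if i \<le> k2 then c i \<noteq> a i else c i) {k1..n}"

lemma out_agrees_iff:
  assumes "0 < k1" and "k1 \<le> n" and b: "b \<in> {k1..n} \<rightarrow>\<^sub>E (UNIV::bool set)"
  shows "(\<forall>i\<in>{1..n}. c i = out k1 k2 a b i)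
           \<longleftrightarrow> (\<forall>i\<in>{1..<k1}. a i = c i) \<and> b = forced_box2_output n k1 k2 c a"
proof
  assume agree: "\<forall>i\<in>{1..n}. c i = out k1 k2 a b i"
  have "a i = c i" if "i \<in> {1..<k1}" for i
    using that assms(2) agree by (auto simp: out_def)
  moreover have "b i = forced_box2_output n k1 k2 c a i" for i
  proof (cases "i \<in> {k1..n}")
    case True
    then have "c i = out k1 k2 a b i" using agree assms(1) by auto
    then show ?thesis using True by (auto simp: out_def forced_box2_output_def)
  next
    case False
    then show ?thesis by (auto simp: forced_box2_output_def PiE_arb[OF b False])
  qed
  ultimately show "(\<forall>i\<in>{1..<k1}. a i = c i) \<and> b = forced_box2_output n k1 k2 c a" by auto
next
  assume "(\<forall>i\<in>{1..<k1}. a i = c i) \<and> b = forced_box2_output n k1 k2 c a"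
  then show "\<forall>i\<in>{1..n}. c i = out k1 k2 a b i"
    by (auto simp: out_def forced_box2_output_def)
qed

lemma composed_box_eq_sum:
  assumes "0 < k1" and "k1 \<le> n"
  shows "composed_box n k1 k2 k3 g1 c x =
           (\<Sum>a \<in> {a \<in> {1..k2} \<rightarrow>\<^sub>E (UNIV::bool set). \<forall>i\<in>{1..<k1}. a i = c i}.
              box1 k2 g1 a x * box2 n k1 k3 (forced_box2_output n k1 k2 c a) x)"
proof -
  define w where "w a b = box1 k2 g1 a x * box2 n k1 k3 b x" for a b
  define b where "b a = forced_box2_output n k1 k2 c a" for a
  define prefix where "prefix a = (\<forall>i\<in>{1..<k1}. a i = c i)" for a :: "nat \<Rightarrow> bool"
  have "b a \<in> {k1..n} \<rightarrow>\<^sub>E (UNIV::bool set)" for a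
    by (simp add: b_def forced_box2_output_def)
  have inner: "(\<Sum>b'\<in>{k1..n} \<rightarrow>\<^sub>E (UNIV::bool set).
                  if \<forall>i\<in>{1..n}. c i = out k1 k2 a b' i then w a b' else 0)
             = (if prefix a then w a (b a) else 0)" for a
  proof -
    have "(\<Sum>b'\<in>{k1..n} \<rightarrow>\<^sub>E (UNIV::bool set).
              if \<forall>i\<in>{1..n}. c i = out k1 k2 a b' i then w a b' else 0)
        = (\<Sum>b'\<in>{k1..n} \<rightarrow>\<^sub>E (UNIV::bool set).
              if prefix a then (if b' = b a then w a b' else 0) else 0)"
    proof (rule sum.cong[OF refl], goal_cases)
      case (1 b')
      then show ?case using out_agrees_iff[OF assms 1, of c k2 a] by (simp add: b_def prefix_def)
    qed
    also have "\<dots> = (if prefix a then w a (b a) else 0)"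
      using \<open>b a \<in> _\<close> by (simp add: finite_PiE)
    finally show ?thesis .
  qed
  have "composed_box n k1 k2 k3 g1 c x =
          (\<Sum>a\<in>{1..k2} \<rightarrow>\<^sub>E (UNIV::bool set). if prefix a then w a (b a) else 0)"
    unfolding composed_box_def w_def[symmetric] inner ..
  also have "\<dots> = (\<Sum>a \<in> {a \<in> {1..k2} \<rightarrow>\<^sub>E (UNIV::bool set). prefix a}. w a (b a))"
    by (simp add: sum.inter_filter finite_PiE)
  finally show ?thesis unfolding w_def b_def prefix_def .
qed

lemma bigxor_forced_box2_output:
  assumes "0 < k1" and "k1 \<le> k2" and "k2 \<le> n" and prefix: "\<forall>i\<in>{1..<k1}. a i = c i"
  shows "bigxor {k1..n} (forced_box2_output n k1 k2 c a) = (bigxor {1..n} c \<noteq> bigxor {1..k2} a)"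
proof -
  let ?b = "forced_box2_output n k1 k2 c a"
  have "bigxor {k1..n} ?b = (bigxor {k1..k2} ?b \<noteq> bigxor {Suc k2..n} ?b)"
    using assms bigxor_ivl_split[of k1 "Suc k2" n ?b] by (simp add: atLeastLessThanSuc_atLeastAtMost)
  also have "bigxor {k1..k2} ?b = bigxor {k1..k2} (\<lambda>i. c i \<noteq> a i)"
    using assms(3) by (intro bigxor_cong) (simp add: forced_box2_output_def)
  also have "\<dots> = (bigxor {k1..k2} c \<noteq> bigxor {k1..k2} a)"
    by (rule bigxor_xor) simp
  also have "bigxor {Suc k2..n} ?b = bigxor {Suc k2..n} c"
    using assms(2) by (intro bigxor_cong) (simp add: forced_box2_output_def)
  finally have "bigxor {k1..n} ?b =
      ((bigxor {k1..k2} c \<noteq> bigxor {k1..k2} a) \<noteq> bigxor {Suc k2..n} c)" .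
  moreover have "bigxor {1..k2} a = (bigxor {1..<k1} c \<noteq> bigxor {k1..k2} a)"
    using assms(1,2) prefix bigxor_ivl_split[of 1 k1 k2 a] bigxor_cong[of "{1..<k1}" a c] by simp
  moreover have "bigxor {1..n} c = (bigxor {1..<k1} c \<noteq> (bigxor {k1..k2} c \<noteq> bigxor {Suc k2..n} c))"
    using assms(1-3) bigxor_ivl_split[of 1 k1 n c] bigxor_ivl_split[of k1 "Suc k2" n c]
    by (simp add: atLeastLessThanSuc_atLeastAtMost)
  ultimately show ?thesis by argo
qed

theorem lemma2:
  fixes n k1 k2 k3 :: nat and g1 :: "(nat \<Rightarrow> bool) \<Rightarrow> bool"
  assumes "n \<ge> 2" and "0 < k1" and "k1 < k2" and "k2 < k3" and "k3 \<le> n" and "k2 < n"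
    and "depends_on_all k2 g1"
  shows "\<forall>x\<in>{1..n} \<rightarrow>\<^sub>E (UNIV::bool set). \<forall>c\<in>{1..n} \<rightarrow>\<^sub>E (UNIV::bool set).
           composed_box n k1 k2 k3 g1 c x = full_box n k1 k2 k3 g1 c x"
proof (intro ballI)
  fix x c :: "nat \<Rightarrow> bool"
  define G where "G = g1 (restrict x {1..k2})"
  define H where "H = (\<forall>i\<in>{k1..k3}. x i)"
  define K :: real where "K = 1 / 2 ^ (k2 - 1) * (1 / 2 ^ (n - k1))"
  have k1_le_n: "k1 \<le> n" using assms by simp
  define Ac where "Ac = {a \<in> {1..k2} \<rightarrow>\<^sub>E (UNIV::bool set). \<forall>i\<in>{1..<k1}. a i = c i}"
  have "composed_box n k1 k2 k3 g1 c x =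
          (\<Sum>a\<in>Ac. if bigxor {1..n} c = (G \<noteq> H) \<and> bigxor {1..k2} a = G then K else 0)"
    using assms unfolding composed_box_eq_sum[OF assms(2) k1_le_n] Ac_def
    by (intro sum.cong) (auto simp: box1_def box2_def G_def H_def K_def bigxor_forced_box2_output)
  also have "\<dots> = (if bigxor {1..n} c = (G \<noteq> H) then K * card {a \<in> Ac. bigxor {1..k2} a = G} else 0)"
    by (simp add: sum.If_cases Ac_def finite_PiE Int_def)
  also have "real (card {a \<in> Ac. bigxor {1..k2} a = G}) = 2 ^ (k2 - k1)"
  proof -
    have "{1..<k1} \<subseteq> {1..k2}" and "{1..<k1} \<noteq> {1..k2}" using assms by auto
    then show ?thesis
      using card_PiE_agree_bigxor[of "{1..k2}" "{1..<k1}" c G] assms(2,3)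
      by (simp add: Ac_def conj_assoc)
  qed
  also have "K * 2 ^ (k2 - k1) = 1 / 2 ^ (n - 1)"
  proof -
    have "(2::real) ^ (k2 - 1) * 2 ^ (n - k1) = 2 ^ (k2 - k1) * 2 ^ (n - 1)"
      using assms by (simp flip: power_add)
    then show ?thesis unfolding K_def by (simp add: field_simps)
  qed
  finally show "composed_box n k1 k2 k3 g1 c x = full_box n k1 k2 k3 g1 c x"
    unfolding full_box_def G_def H_def by simp
qed

end
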